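(* Let $\kappa>0$, $u_0>0$, and let $u=u(r;u_0)$ be the solution of $$\frac{d}{dr}\Big(\frac{u'}{\sqrt{1+u'^2}}\Big)=\kappa u,\qquad u(0)=u_0,\ u'(0)=0,$$ on its maximal interval $[0,R)$. Let $0<a\le R$ and $0\le\gamma<\pi/2$ be such that the surface $z=u(x)$ meets the vertical wall $x=a$ with contact angle $\gamma$, i.e. $\sin\psi(a)=\cos\gamma$ where $\sin\psi=u'/\sqrt{1+u'^2}$ (extended continuously to $r=a$). Then $$q:=u(a)-u(0)=\frac{\frac2\kappa(1-\sin\gamma)}{u_0+\sqrt{u_0^2+\frac2\kappa(1-\sin\gamma)}}<\sqrt{\frac2\kappa(1-\sin\gamma)}.$$
   Context: The function $u$ is the profile of a $\kappa$-cylindrical surface (capillary surface $z=u(x)$ translation invariant in $y$) over the strip $|x|<a$ between two vertical plates; $\psi$ is the inclination angle of the graph of $u$. On $[0,R)$, $u$ is increasing and $u'\to\infty$ as $r\to R$ (so $\gamma=0$ corresponds to $a=R$). *)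

theory Defs
  imports "HOL-Analysis.Analysis"
begin

end

theory Submission
  imports Defs
begin

text \<open>Along the solution the energy \<open>\<kappa> u\<^sup>2 / 2 + cos \<psi>\<close> is conserved: its derivative is
  \<open>\<kappa> u u' - \<kappa> u sin \<psi> / cos \<psi>\<close>, and \<open>tan \<psi> = u'\<close>. Comparing the energy at \<open>r = 0\<close>
  (where \<open>cos \<psi> = 1\<close>) with its limit at the wall (where \<open>cos \<psi> = sin \<gamma>\<close>) gives
  \<open>u(a)\<^sup>2 = u\<^sub>0\<^sup>2 + 2 (1 - sin \<gamma>) / \<kappa>\<close>, and since the energy also forces \<open>u \<ge> u\<^sub>0\<close>, solving for
  \<open>u(a)\<close> yields the formula for \<open>q\<close>.\<close>

definition sin_incl :: "real \<Rightarrow> real" where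
  "sin_incl v = v / sqrt (1 + v\<^sup>2)"

definition cos_incl :: "real \<Rightarrow> real" where
  "cos_incl v = 1 / sqrt (1 + v\<^sup>2)"

lemma cos_incl_pos: "cos_incl v > 0"
  by (simp add: cos_incl_def add_pos_nonneg)

lemma cos_incl_le_1: "cos_incl v \<le> 1"
proof -
  have "1 \<le> sqrt (1 + v\<^sup>2)" by simp
  then show ?thesis by (simp add: cos_incl_def divide_le_eq_1 add_pos_nonneg)
qed

lemma cos_incl_0 [simp]: "cos_incl 0 = 1"
  by (simp add: cos_incl_def)

lemma cos_incl_eq_sqrt: "cos_incl v = sqrt (1 - (sin_incl v)\<^sup>2)"
proof -
  have "1 + v\<^sup>2 > 0" by (simp add: add_pos_nonneg)
  then have "1 - (sin_incl v)\<^sup>2 = 1 / (1 + v\<^sup>2)"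
    by (simp add: sin_incl_def power_divide field_simps)
  then show ?thesis
    by (simp add: cos_incl_def real_sqrt_divide)
qed

lemma sin_incl_div_cos_incl: "sin_incl v / cos_incl v = v"
proof -
  have "1 + v\<^sup>2 > 0" by (simp add: add_pos_nonneg)
  then show ?thesis by (simp add: sin_incl_def cos_incl_def)
qed

lemma capillary_energy_has_derivative_0:
  fixes u u' :: "real \<Rightarrow> real"
  assumes "(u has_real_derivative u' r) (at r within S)"
    and "((\<lambda>t. sin_incl (u' t)) has_real_derivative \<kappa> * u r) (at r within S)"
  shows "((\<lambda>t. \<kappa> * (u t)\<^sup>2 / 2 + cos_incl (u' t)) has_real_derivative 0) (at r within S)"
proof -
  define s where "s t = sin_incl (u' t)" for t
  have ds: "(s has_real_derivative \<kappa> * u r) (at r within S)"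
    using assms(2) unfolding s_def [abs_def] .
  have "(s r)\<^sup>2 < 1"
    using cos_incl_pos[of "u' r"] by (simp add: s_def cos_incl_eq_sqrt)
  then have deriv: "((\<lambda>t. \<kappa> * (u t)\<^sup>2 / 2 + sqrt (1 - (s t)\<^sup>2)) has_real_derivative
      \<kappa> * u r * u' r - \<kappa> * u r * (s r / sqrt (1 - (s r)\<^sup>2))) (at r within S)"
    using assms(1) ds by (auto intro!: derivative_eq_intros simp: field_simps)
  have tan_eq: "s r / sqrt (1 - (s r)\<^sup>2) = u' r"
    using sin_incl_div_cos_incl by (simp add: s_def cos_incl_eq_sqrt)
  have "((\<lambda>t. \<kappa> * (u t)\<^sup>2 / 2 + sqrt (1 - (s t)\<^sup>2)) has_real_derivative 0) (at r within S)"
    using deriv unfolding tan_eq by simp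
  then show ?thesis
    by (simp add: s_def cos_incl_eq_sqrt)
qed

lemma capillary_energy_const:
  fixes u u' :: "real \<Rightarrow> real"
  assumes "convex S"
    and "\<forall>r\<in>S. (u has_real_derivative u' r) (at r within S)"
    and "\<forall>r\<in>S. ((\<lambda>t. sin_incl (u' t)) has_real_derivative \<kappa> * u r) (at r within S)"
    and "x \<in> S" "y \<in> S"
  shows "\<kappa> * (u x)\<^sup>2 / 2 + cos_incl (u' x) = \<kappa> * (u y)\<^sup>2 / 2 + cos_incl (u' y)"
proof -
  have "\<exists>c. \<forall>t\<in>S. \<kappa> * (u t)\<^sup>2 / 2 + cos_incl (u' t) = c"
    by (rule has_field_derivative_zero_constant[OF \<open>convex S\<close>])
      (use assms(2,3) capillary_energy_has_derivative_0 in blast)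
  then show ?thesis
    using assms(4,5) by auto
qed

text \<open>Since \<open>cos \<psi> \<le> 1 = cos \<psi>(0)\<close>, conservation of energy gives \<open>u\<^sup>2 \<ge> u\<^sub>0\<^sup>2\<close>, and by
  continuity \<open>u\<close> cannot change sign.\<close>

lemma capillary_height_ge_initial:
  fixes u u' :: "real \<Rightarrow> real"
  assumes "\<kappa> > 0" "u 0 > 0" "u' 0 = 0"
    and "continuous_on {0..<R} u"
    and energy: "\<forall>r\<in>{0..<R}. \<kappa> * (u r)\<^sup>2 / 2 + cos_incl (u' r) = \<kappa> * (u 0)\<^sup>2 / 2 + 1"
    and "r \<in> {0..<R}"
  shows "u 0 \<le> u r"
proof -
  have sq_ge: "(u 0)\<^sup>2 \<le> (u x)\<^sup>2" if "x \<in> {0..<R}" for x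
  proof -
    have "\<kappa> * (u 0)\<^sup>2 \<le> \<kappa> * (u x)\<^sup>2"
      using energy that cos_incl_le_1[of "u' x"] by fastforce
    then show ?thesis using \<open>\<kappa> > 0\<close> by simp
  qed
  have "u r > 0"
  proof (rule ccontr)
    assume "\<not> u r > 0"
    moreover have "continuous_on {0..r} u"
      using assms(6) by (intro continuous_on_subset[OF assms(4)]) auto
    ultimately obtain x where "0 \<le> x" "x \<le> r" "u x = 0"
      using IVT2'[of u r 0 0] assms(2,6) by auto
    then show False
      using sq_ge[of x] assms(2,6) by simp
  qed
  then show ?thesis
    using power2_le_imp_le[OF sq_ge[OF assms(6)]] by simp
qed

lemma cos_incl_tendsto_sin:
  assumes "((\<lambda>r. sin_incl (f r)) \<longlongrightarrow> cos \<gamma>) F" "0 \<le> \<gamma>" "\<gamma> \<le> pi"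
  shows "((\<lambda>r. cos_incl (f r)) \<longlongrightarrow> sin \<gamma>) F"
proof -
  have "((\<lambda>r. sqrt (1 - (sin_incl (f r))\<^sup>2)) \<longlongrightarrow> sqrt (1 - (cos \<gamma>)\<^sup>2)) F"
    using assms(1) by (intro tendsto_intros)
  moreover have "sqrt (1 - (cos \<gamma>)\<^sup>2) = sin \<gamma>"
    using sin_ge_zero[OF assms(2,3)] by (simp add: sin_squared_eq[symmetric])
  ultimately show ?thesis
    by (simp add: cos_incl_eq_sqrt)
qed

lemma capillary_energy_at_wall:
  fixes u u' :: "real \<Rightarrow> real"
  assumes energy: "\<forall>r\<in>{0..<R}. \<kappa> * (u r)\<^sup>2 / 2 + cos_incl (u' r) = E"
    and "0 < a" "a \<le> R" "continuous (at_left a) u"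
    and "((\<lambda>r. sin_incl (u' r)) \<longlongrightarrow> cos \<gamma>) (at_left a)" "0 \<le> \<gamma>" "\<gamma> \<le> pi"
  shows "\<kappa> * (u a)\<^sup>2 / 2 + sin \<gamma> = E"
proof -
  have "((\<lambda>r. \<kappa> * (u r)\<^sup>2 / 2 + cos_incl (u' r)) \<longlongrightarrow> \<kappa> * (u a)\<^sup>2 / 2 + sin \<gamma>) (at_left a)"
    using assms(4-7) cos_incl_tendsto_sin[of u' \<gamma>]
    by (auto intro!: tendsto_intros simp: continuous_within)
  moreover have "\<forall>\<^sub>F r in at_left a. r \<in> {0..<R}"
    using eventually_at_left_real[OF \<open>0 < a\<close>] by (rule eventually_mono) (use \<open>a \<le> R\<close> in auto)
  then have "((\<lambda>r. \<kappa> * (u r)\<^sup>2 / 2 + cos_incl (u' r)) \<longlongrightarrow> E) (at_left a)"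
    by (intro Lim_transform_eventually[OF tendsto_const]) (use energy in \<open>auto elim: eventually_mono\<close>)
  ultimately show ?thesis
    by (rule tendsto_unique[OF trivial_limit_at_left_real])
qed

lemma sqrt_add_minus_eq_div:
  fixes b d :: real
  assumes "0 < b" "0 \<le> d"
  shows "sqrt (b\<^sup>2 + d) - b = d / (b + sqrt (b\<^sup>2 + d))"
proof -
  have "b + sqrt (b\<^sup>2 + d) > 0"
    using assms by (simp add: add_pos_nonneg)
  then show ?thesis
    using assms by (simp add: field_simps power2_eq_square)
qed

lemma sqrt_add_minus_less_sqrt:
  fixes b d :: real
  assumes "0 < b" "0 < d"
  shows "sqrt (b\<^sup>2 + d) - b < sqrt d"
proof -
  have "b\<^sup>2 + d < (b + sqrt d)\<^sup>2"
    using assms by (simp add: power2_sum)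
  then have "sqrt (b\<^sup>2 + d) < b + sqrt d"
    using assms by (metis real_sqrt_less_mono real_sqrt_abs abs_of_pos add_pos_pos real_sqrt_gt_0_iff)
  then show ?thesis by simp
qed

theorem mainTheorem7:
  fixes u u' :: "real \<Rightarrow> real" and \<kappa> u0 R a \<gamma> :: real
  assumes kappa_pos: "\<kappa> > 0" and u0_pos: "u0 > 0"
    and u_deriv: "\<forall>r\<in>{0..<R}. (u has_real_derivative u' r) (at r within {0..<R})"
    and ode: "\<forall>r\<in>{0..<R}. ((\<lambda>t. u' t / sqrt (1 + (u' t)\<^sup>2)) has_real_derivative \<kappa> * u r)
                (at r within {0..<R})"
    and init: "u 0 = u0" "u' 0 = 0"
    and maximal: "filterlim u' at_top (at_left R)"
    and a_bounds: "0 < a" "a \<le> R"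
    and gamma_bounds: "0 \<le> \<gamma>" "\<gamma> < pi / 2"
    and u_cont_a: "continuous (at_left a) u"
    and contact: "((\<lambda>r. u' r / sqrt (1 + (u' r)\<^sup>2)) \<longlongrightarrow> cos \<gamma>) (at_left a)"
  shows "u a - u 0 = (2 / \<kappa> * (1 - sin \<gamma>)) / (u0 + sqrt (u0\<^sup>2 + 2 / \<kappa> * (1 - sin \<gamma>)))
         \<and> u a - u 0 < sqrt (2 / \<kappa> * (1 - sin \<gamma>))"
proof -
  define D where "D = 2 / \<kappa> * (1 - sin \<gamma>)"
  have energy: "\<forall>r\<in>{0..<R}. \<kappa> * (u r)\<^sup>2 / 2 + cos_incl (u' r) = \<kappa> * u0\<^sup>2 / 2 + 1"
    using capillary_energy_const[of "{0..<R}" u u' \<kappa> _ 0] u_deriv ode init a_bounds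
    by (simp add: sin_incl_def)
  have "\<kappa> * (u a)\<^sup>2 / 2 + sin \<gamma> = \<kappa> * u0\<^sup>2 / 2 + 1"
    using capillary_energy_at_wall[OF energy a_bounds u_cont_a] contact gamma_bounds
    by (simp add: sin_incl_def)
  then have "(u a)\<^sup>2 = u0\<^sup>2 + D"
    using kappa_pos by (simp add: D_def field_simps)
  moreover have "u0 \<le> u a"
  proof (rule tendsto_lowerbound[OF _ _ trivial_limit_at_left_real])
    show "(u \<longlongrightarrow> u a) (at_left a)"
      using u_cont_a by (simp add: continuous_within)
    have "continuous_on {0..<R} u"
      using u_deriv by (meson DERIV_continuous continuous_on_eq_continuous_within)
    then show "\<forall>\<^sub>F r in at_left a. u0 \<le> u r"
      using eventually_at_left_real[OF \<open>0 < a\<close>] capillary_height_ge_initial[of \<kappa> u u' R]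
        energy kappa_pos u0_pos init \<open>a \<le> R\<close>
      by (auto elim!: eventually_mono)
  qed
  ultimately have "u a = sqrt (u0\<^sup>2 + D)"
    using u0_pos by (metis abs_of_nonneg less_le_trans less_imp_le real_sqrt_abs)
  moreover have "0 < D"
    using sin_monotone_2pi[of \<gamma> "pi / 2"] kappa_pos gamma_bounds by (simp add: D_def)
  ultimately show ?thesis
    unfolding D_def[symmetric] init(1)
    using sqrt_add_minus_eq_div[of u0 D] sqrt_add_minus_less_sqrt[of u0 D] u0_pos by simp
qed

end
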